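(* For a rectangular element $K=[x_1,x_2]\times[y_1,y_2]$ of a regular rectangular partition $T_h$, with vertices $P_1=(x_1,y_1)$, $P_2=(x_2,y_1)$, $P_3=(x_2,y_2)$, $P_4=(x_1,y_2)$, and for $w_h\in U_h$ with $w_i=w_h(P_i)$, define $$|w_h|_{1,h,K}^2=(w_2-w_1)^2+(w_3-w_2)^2+(w_3-w_4)^2+(w_4-w_1)^2,\qquad |w_h|_{1,h}=\Big(\sum_{K\in T_h}|w_h|_{1,h,K}^2\Big)^{1/2}.$$ Then for every $K\in T_h$ and every $w_h\in U_h$, $$\frac{1}{6\gamma}|w_h|_{1,h,K}^2\le|w_h|_{1,K}^2\le\frac{\gamma}{2}|w_h|_{1,h,K}^2;$$ in particular $|\cdot|_{1,h}$ is equivalent to $|\cdot|_1$ on $U_h$.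
   Context: $\Omega\subset\mathbb{R}^2$ is an open rectangle. $T_h$ is a conforming partition of $\overline\Omega$ into closed rectangles with sides parallel to the axes; $h_K$ is the diameter of $K$, $\rho_K$ the diameter of the largest ball contained in $K$, and regularity means $h_K/\rho_K\le\gamma$ for all $K\in T_h$. $U_h=\{v\in C^0(\overline\Omega): v|_K\in Q_1(K)\ \forall K,\ v|_{\partial\Omega}=0\}$ ($Q_1$ = bilinear polynomials). $|w|_{1,K}^2=\int_K|\nabla w|^2$ and $|w|_1^2=\int_\Omega|\nabla w|^2$. *)

theory Defs
  imports "HOL-Analysis.Analysis"
begin

definition xlo :: "(real \<times> real) set \<Rightarrow> real" where "xlo K = Inf (fst ` K)"
definition xhi :: "(real \<times> real) set \<Rightarrow> real" where "xhi K = Sup (fst ` K)"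
definition ylo :: "(real \<times> real) set \<Rightarrow> real" where "ylo K = Inf (snd ` K)"
definition yhi :: "(real \<times> real) set \<Rightarrow> real" where "yhi K = Sup (snd ` K)"

definition is_rect :: "(real \<times> real) set \<Rightarrow> bool" where
  "is_rect K \<longleftrightarrow> (\<exists>x1 x2 y1 y2. x1 < x2 \<and> y1 < y2 \<and> K = {x1..x2} \<times> {y1..y2})"

definition rect_vertices :: "(real \<times> real) set \<Rightarrow> (real \<times> real) set" where
  "rect_vertices K = {(xlo K, ylo K), (xhi K, ylo K), (xhi K, yhi K), (xlo K, yhi K)}"

definition rect_edges :: "(real \<times> real) set \<Rightarrow> (real \<times> real) set set" where
  "rect_edges K = {{xlo K..xhi K} \<times> {ylo K}, {xhi K} \<times> {ylo K..yhi K},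
                   {xlo K..xhi K} \<times> {yhi K}, {xlo K} \<times> {ylo K..yhi K}}"

definition conforming_rect_partition ::
  "(real \<times> real) set set \<Rightarrow> (real \<times> real) set \<Rightarrow> bool" where
  "conforming_rect_partition T \<Omega> \<longleftrightarrow>
     finite T \<and> (\<forall>K\<in>T. is_rect K) \<and> \<Union>T = closure \<Omega> \<and>
     (\<forall>K\<in>T. \<forall>K'\<in>T. K \<noteq> K' \<longrightarrow>
        interior K \<inter> interior K' = {} \<and>
        (K \<inter> K' = {} \<or>
         (\<exists>v \<in> rect_vertices K \<inter> rect_vertices K'. K \<inter> K' = {v}) \<or>
         K \<inter> K' \<in> rect_edges K \<inter> rect_edges K'))"

definition rho :: "(real \<times> real) set \<Rightarrow> real" where
  "rho K = Sup {diameter (cball z r) | z r. 0 < r \<and> cball z r \<subseteq> K}"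

definition Q1 :: "(real \<times> real \<Rightarrow> real) set" where
  "Q1 = {q. \<exists>c0 c1 c2 c3. \<forall>x y. q (x, y) = c0 + c1 * x + c2 * y + c3 * x * y}"

definition Uh :: "(real \<times> real) set set \<Rightarrow> (real \<times> real) set \<Rightarrow> (real \<times> real \<Rightarrow> real) set" where
  "Uh T \<Omega> = {v. continuous_on (closure \<Omega>) v \<and>
                 (\<forall>K\<in>T. \<exists>q\<in>Q1. \<forall>p\<in>K. v p = q p) \<and>
                 (\<forall>p\<in>frontier \<Omega>. v p = 0)}"

definition grad_sq :: "(real \<times> real \<Rightarrow> real) \<Rightarrow> real \<times> real \<Rightarrow> real" where
  "grad_sq w p = (deriv (\<lambda>t. w (t, snd p)) (fst p))\<^sup>2 + (deriv (\<lambda>t. w (fst p, t)) (snd p))\<^sup>2"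

definition semi1K_sq :: "(real \<times> real \<Rightarrow> real) \<Rightarrow> (real \<times> real) set \<Rightarrow> real" where
  "semi1K_sq w K = integral K (grad_sq w)"

definition semi1 :: "(real \<times> real \<Rightarrow> real) \<Rightarrow> (real \<times> real) set \<Rightarrow> real" where
  "semi1 w \<Omega> = sqrt (integral \<Omega> (grad_sq w))"

definition semi1hK_sq :: "(real \<times> real \<Rightarrow> real) \<Rightarrow> (real \<times> real) set \<Rightarrow> real" where
  "semi1hK_sq w K =
     (let w1 = w (xlo K, ylo K); w2 = w (xhi K, ylo K);
          w3 = w (xhi K, yhi K); w4 = w (xlo K, yhi K)
      in (w2 - w1)\<^sup>2 + (w3 - w2)\<^sup>2 + (w3 - w4)\<^sup>2 + (w4 - w1)\<^sup>2)"

definition semi1h :: "(real \<times> real \<Rightarrow> real) \<Rightarrow> (real \<times> real) set set \<Rightarrow> real" where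
  "semi1h w T = sqrt (\<Sum>K\<in>T. semi1hK_sq w K)"

end

theory Submission
  imports Defs
begin

text \<open>On an element \<open>K\<close> the function \<open>w\<close> is bilinear, so \<open>\<partial>_x w\<close> is affine in \<open>y\<close> and
  \<open>\<partial>_y w\<close> is affine in \<open>x\<close>. An affine function with endpoint values \<open>a\<close>, \<open>b\<close> has mean square
  \<open>(a^2 + ab + b^2)/3\<close>, which lies between \<open>(a^2 + b^2)/6\<close> and \<open>(a^2 + b^2)/2\<close>; and the endpoint
  values of \<open>\<partial>_x w\<close> are the difference quotients \<open>(w_2 - w_1)/h_x\<close> and \<open>(w_3 - w_4)/h_x\<close> along
  the horizontal edges (similarly for \<open>\<partial>_y w\<close>). Hence \<open>|w|_{1,K}^2\<close> and \<open>|w|_{1,h,K}^2\<close> agree up to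
  these constants and the aspect ratios \<open>h_x/h_y\<close>, \<open>h_y/h_x\<close>, both at most \<open>\<gamma>\<close> by regularity.
  Summing over the elements, which overlap only in null sets, gives the global equivalence.\<close>

lemma rect_corners:
  assumes "x1 < x2" "y1 < y2" "K = {x1..x2} \<times> {y1..y2::real}"
  shows "xlo K = x1" "xhi K = x2" "ylo K = y1" "yhi K = y2"
  using assms by (auto simp: xlo_def xhi_def ylo_def yhi_def)

lemma cbox_real_pair: "cbox (x1::real, y1::real) (x2, y2) = {x1..x2} \<times> {y1..y2}"
  by (metis cbox_Pair_eq cbox_interval)

lemma box_real_pair: "box (x1::real, y1::real) (x2, y2) = {x1<..<x2} \<times> {y1<..<y2}"
  by (auto simp: box_def Basis_prod_def inner_Pair ball_Un Basis_real_def)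

lemma negligible_rect_boundary:
  "negligible ({x1..x2::real} \<times> {y1..y2::real} - {x1<..<x2} \<times> {y1<..<y2})"
  using negligible_frontier_interval[of "(x1, y1)" "(x2, y2)"]
  unfolding cbox_real_pair box_real_pair .

lemma negligible_rect_minus_interior: "is_rect K \<Longrightarrow> negligible (K - interior K)"
  unfolding is_rect_def by (auto simp: interior_Times negligible_rect_boundary)

lemma diameter_rect:
  assumes "x1 \<le> x2" "y1 \<le> y2"
  shows "diameter ({x1..x2} \<times> {y1..y2::real}) = sqrt ((x2 - x1)\<^sup>2 + (y2 - y1)\<^sup>2)"
proof -
  have "diameter (cbox (x1, y1) (x2, y2)) = dist (x1, y1) (x2, y2)"
    using assms by (intro diameter_cbox) (auto simp: Basis_prod_def)
  then show ?thesis
    by (simp add: cbox_real_pair dist_Pair_Pair dist_real_def power2_commute)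
qed

lemma rho_rect:
  assumes "x1 < x2" "y1 < y2"
  shows "rho ({x1..x2} \<times> {y1..y2}) = min (x2 - x1) (y2 - y1)"
proof -
  define K where "K = {x1..x2} \<times> {y1..y2}"
  define m where "m = min (x2 - x1) (y2 - y1)"
  let ?S = "{diameter (cball z r) | z r. 0 < r \<and> cball z r \<subseteq> K}"
  have upper: "d \<le> m" if "d \<in> ?S" for d
  proof -
    obtain a b r where d: "d = diameter (cball (a, b) r)" "0 < r" "cball (a, b) r \<subseteq> K"
      using \<open>d \<in> ?S\<close> by auto
    have "(a + r, b) \<in> K" "(a - r, b) \<in> K" "(a, b + r) \<in> K" "(a, b - r) \<in> K"
      using d(2,3) by (auto simp: subset_iff dist_Pair_Pair dist_real_def)
    then show ?thesis
      using d(1,2) by (auto simp: K_def m_def)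
  qed
  have attained: "m \<in> ?S"
  proof -
    let ?c = "((x1 + x2) / 2, (y1 + y2) / 2)"
    have "cball ?c (m / 2) \<subseteq> K"
    proof
      fix p assume "p \<in> cball ?c (m / 2)"
      then have "dist (fst ?c) (fst p) \<le> m / 2" "dist (snd ?c) (snd p) \<le> m / 2"
        using dist_fst_le[of ?c p] dist_snd_le[of ?c p] by auto
      then have "x1 \<le> fst p" "fst p \<le> x2" "y1 \<le> snd p" "snd p \<le> y2"
        unfolding m_def dist_real_def fst_conv snd_conv by argo+
      then show "p \<in> K"
        by (cases p) (simp add: K_def)
    qed
    moreover have "0 < m / 2" "diameter (cball ?c (m / 2)) = m"
      using assms by (auto simp: m_def)
    ultimately show ?thesis by (metis (mono_tags, lifting) mem_Collect_eq)
  qed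
  have "Sup ?S = m"
    using upper attained by (intro cSup_eq_maximum) auto
  then show ?thesis by (simp add: rho_def K_def m_def)
qed

text \<open>Since \<open>\<rho>_K\<close> is the shorter side and \<open>h_K\<close> exceeds the longer one, regularity bounds
  the aspect ratio of every element by \<open>\<gamma>\<close>.\<close>

lemma rect_aspect_ratio_le:
  assumes "x1 < x2" "y1 < y2" "diameter ({x1..x2} \<times> {y1..y2}) / rho ({x1..x2} \<times> {y1..y2}) \<le> g"
  shows "x2 - x1 \<le> g * (y2 - y1)" "y2 - y1 \<le> g * (x2 - x1)"
proof -
  define h where "h = sqrt ((x2 - x1)\<^sup>2 + (y2 - y1)\<^sup>2)"
  have "h / min (x2 - x1) (y2 - y1) \<le> g"
    using assms by (simp add: diameter_rect rho_rect h_def)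
  then have "h \<le> g * min (x2 - x1) (y2 - y1)"
    using assms(1,2) by (simp add: divide_le_eq)
  moreover have "x2 - x1 \<le> h" "y2 - y1 \<le> h" by (simp_all add: h_def)
  moreover have "0 \<le> g"
    using calculation assms(1,2) by (smt (verit) mult_nonpos_nonneg)
  ultimately show "x2 - x1 \<le> g * (y2 - y1)" "y2 - y1 \<le> g * (x2 - x1)"
    by (smt (verit) mult_left_mono min.cobounded1 min.cobounded2)+
qed

definition affine_sq_mean :: "real \<Rightarrow> real \<Rightarrow> real" where
  "affine_sq_mean a b = (a\<^sup>2 + a * b + b\<^sup>2) / 3"

lemma affine_sq_mean_bounds:
  "(a\<^sup>2 + b\<^sup>2) / 6 \<le> affine_sq_mean a b" "affine_sq_mean a b \<le> (a\<^sup>2 + b\<^sup>2) / 2"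
  using zero_le_power2[of "a + b"] zero_le_power2[of "a - b"]
  by (simp_all add: affine_sq_mean_def power2_eq_square algebra_simps)

lemma has_integral_affine_sq:
  assumes "u \<le> v"
  shows "((\<lambda>t. (a + b * t)\<^sup>2) has_integral (v - u) * affine_sq_mean (a + b * u) (a + b * v)) {u..v}"
proof -
  let ?F = "\<lambda>t. a\<^sup>2 * t + a * b * t\<^sup>2 + b\<^sup>2 * t ^ 3 / 3"
  have "(?F has_vector_derivative (a + b * t)\<^sup>2) (at t within {u..v})" for t
    unfolding has_real_derivative_iff_has_vector_derivative[symmetric]
    by (rule derivative_eq_intros refl | simp)+ (simp add: power2_eq_square algebra_simps)
  then have "((\<lambda>t. (a + b * t)\<^sup>2) has_integral (?F v - ?F u)) {u..v}"
    using assms by (intro fundamental_theorem_of_calculus) auto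
  moreover have "?F v - ?F u = (v - u) * affine_sq_mean (a + b * u) (a + b * v)"
    by (simp add: affine_sq_mean_def power2_eq_square power3_eq_cube field_simps)
  ultimately show ?thesis by simp
qed

lemma integral_rect_affine_sq_sum:
  assumes "x1 \<le> x2" "y1 \<le> y2"
  shows "integral ({x1..x2} \<times> {y1..y2}) (\<lambda>p. (a + b * snd p)\<^sup>2 + (c + d * fst p)\<^sup>2)
    = (x2 - x1) * (y2 - y1) *
      (affine_sq_mean (a + b * y1) (a + b * y2) + affine_sq_mean (c + d * x1) (c + d * x2))"
proof -
  define M1 where "M1 = affine_sq_mean (a + b * y1) (a + b * y2)"
  define M2 where "M2 = affine_sq_mean (c + d * x1) (c + d * x2)"
  have inner: "integral {y1..y2} (\<lambda>y. (a + b * y)\<^sup>2 + (c + d * x)\<^sup>2)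
      = (y2 - y1) * M1 + (y2 - y1) * (c + d * x)\<^sup>2" for x
    using has_integral_add[OF has_integral_affine_sq[OF assms(2), of a b]
        has_integral_const_real[of "(c + d * x)\<^sup>2" y1 y2]] assms
    by (simp add: integral_unique M1_def)
  have outer: "integral {x1..x2} (\<lambda>x. (y2 - y1) * M1 + (y2 - y1) * (c + d * x)\<^sup>2)
      = (x2 - x1) * (y2 - y1) * (M1 + M2)"
    using has_integral_add[OF has_integral_const_real[of "(y2 - y1) * M1" x1 x2]
        has_integral_mult_right[OF has_integral_affine_sq[OF assms(1), of c d], of "y2 - y1"]] assms
    by (simp add: integral_unique M2_def algebra_simps)
  have "continuous_on (cbox (x1, y1) (x2, y2)) (\<lambda>p. (a + b * snd p)\<^sup>2 + (c + d * fst p)\<^sup>2)"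
    by (intro continuous_intros)
  then have "integral ({x1..x2} \<times> {y1..y2}) (\<lambda>p. (a + b * snd p)\<^sup>2 + (c + d * fst p)\<^sup>2)
      = integral {x1..x2} (\<lambda>x. integral {y1..y2} (\<lambda>y. (a + b * y)\<^sup>2 + (c + d * x)\<^sup>2))"
    by (simp add: integral_prod_continuous flip: cbox_real_pair)
  also have "\<dots> = (x2 - x1) * (y2 - y1) * (M1 + M2)"
    unfolding inner outer ..
  finally show ?thesis by (simp add: M1_def M2_def)
qed

lemma grad_sq_bilinear:
  assumes "x1 < x" "x < x2" "y1 < y" "y < y2"
    and "\<forall>s t. (s, t) \<in> {x1..x2} \<times> {y1..y2} \<longrightarrow> w (s, t) = c0 + c1 * s + c2 * t + c3 * s * t"
  shows "grad_sq w (x, y) = (c1 + c3 * y)\<^sup>2 + (c2 + c3 * x)\<^sup>2"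
proof -
  have "((\<lambda>s. c0 + c1 * s + c2 * y + c3 * s * y) has_real_derivative c1 + c3 * y) (at x)"
    by (auto intro!: derivative_eq_intros)
  then have dx: "((\<lambda>s. w (s, y)) has_real_derivative c1 + c3 * y) (at x)"
    by (rule has_field_derivative_transform_within_open[where S = "{x1<..<x2}"]) (use assms in auto)
  have "((\<lambda>t. c0 + c1 * x + c2 * t + c3 * x * t) has_real_derivative c2 + c3 * x) (at y)"
    by (auto intro!: derivative_eq_intros)
  then have dy: "((\<lambda>t. w (x, t)) has_real_derivative c2 + c3 * x) (at y)"
    by (rule has_field_derivative_transform_within_open[where S = "{y1<..<y2}"]) (use assms in auto)
  show ?thesis
    using DERIV_imp_deriv[OF dx] DERIV_imp_deriv[OF dy] by (simp add: grad_sq_def)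
qed

text \<open>The gradient formula holds only in the open rectangle, where the partial derivatives
  see \<open>w\<close> on both sides; the boundary is negligible.\<close>

lemma has_integral_grad_sq_bilinear:
  assumes "x1 \<le> x2" "y1 \<le> y2"
    and "\<forall>s t. (s, t) \<in> {x1..x2} \<times> {y1..y2} \<longrightarrow> w (s, t) = c0 + c1 * s + c2 * t + c3 * s * t"
  shows "(grad_sq w has_integral (x2 - x1) * (y2 - y1) *
     (affine_sq_mean (c1 + c3 * y1) (c1 + c3 * y2) + affine_sq_mean (c2 + c3 * x1) (c2 + c3 * x2)))
     ({x1..x2} \<times> {y1..y2})"
proof -
  let ?f = "\<lambda>p. (c1 + c3 * snd p)\<^sup>2 + (c2 + c3 * fst p)\<^sup>2"
  have "?f integrable_on cbox (x1, y1) (x2, y2)"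
    by (intro integrable_continuous continuous_intros)
  then have f: "(?f has_integral integral ({x1..x2} \<times> {y1..y2}) ?f) ({x1..x2} \<times> {y1..y2})"
    by (simp add: cbox_real_pair has_integral_integral)
  have "(grad_sq w has_integral integral ({x1..x2} \<times> {y1..y2}) ?f) ({x1..x2} \<times> {y1..y2})"
    by (rule has_integral_spike[OF negligible_rect_boundary _ f])
      (use grad_sq_bilinear[OF _ _ _ _ assms(3)] in auto)
  then show ?thesis
    by (simp add: integral_rect_affine_sq_sum assms(1,2))
qed

lemma semi1hK_sq_bilinear:
  assumes "x1 < x2" "y1 < y2" "K = {x1..x2} \<times> {y1..y2}"
    and "\<forall>s t. (s, t) \<in> K \<longrightarrow> w (s, t) = c0 + c1 * s + c2 * t + c3 * s * t"
  shows "semi1hK_sq w K = (x2 - x1)\<^sup>2 * ((c1 + c3 * y1)\<^sup>2 + (c1 + c3 * y2)\<^sup>2)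
                        + (y2 - y1)\<^sup>2 * ((c2 + c3 * x1)\<^sup>2 + (c2 + c3 * x2)\<^sup>2)"
proof -
  have diffs: "w (x2, y1) - w (x1, y1) = (x2 - x1) * (c1 + c3 * y1)"
       "w (x2, y2) - w (x2, y1) = (y2 - y1) * (c2 + c3 * x2)"
       "w (x2, y2) - w (x1, y2) = (x2 - x1) * (c1 + c3 * y2)"
       "w (x1, y2) - w (x1, y1) = (y2 - y1) * (c2 + c3 * x1)"
    using assms by (simp_all add: algebra_simps)
  show ?thesis
    unfolding semi1hK_sq_def rect_corners[OF assms(1-3)] Let_def diffs
    by (simp only: power_mult_distrib distrib_left[of "(x2 - x1)\<^sup>2"]
        distrib_left[of "(y2 - y1)\<^sup>2"] add_ac)
qed

lemma rect_energy_bounds: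
  fixes hx hy g A B C D :: real
  assumes "0 < hx" "0 < hy" "hx \<le> g * hy" "hy \<le> g * hx"
  defines "E \<equiv> hx * hy * (affine_sq_mean A B + affine_sq_mean C D)"
    and "S \<equiv> hx\<^sup>2 * (A\<^sup>2 + B\<^sup>2) + hy\<^sup>2 * (C\<^sup>2 + D\<^sup>2)"
  shows "1 / (6 * g) * S \<le> E" "E \<le> g / 2 * S"
proof -
  have "0 < g"
    using assms(1-3) by (smt (verit) mult_nonpos_nonneg)
  have hx2: "hx\<^sup>2 \<le> g * (hx * hy)" and hy2: "hy\<^sup>2 \<le> g * (hx * hy)"
    using mult_left_mono[OF assms(3), of hx] mult_left_mono[OF assms(4), of hy] assms(1,2)
    by (simp_all add: power2_eq_square algebra_simps)
  have hxy: "hx * hy \<le> g * hx\<^sup>2" "hx * hy \<le> g * hy\<^sup>2"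
    using mult_left_mono[OF assms(4), of hx] mult_left_mono[OF assms(3), of hy] assms(1,2)
    by (simp_all add: power2_eq_square algebra_simps)
  note M = affine_sq_mean_bounds
  have "S \<le> g * (hx * hy) * (A\<^sup>2 + B\<^sup>2) + g * (hx * hy) * (C\<^sup>2 + D\<^sup>2)"
    unfolding S_def using hx2 hy2 by (intro add_mono mult_right_mono) auto
  also have "\<dots> \<le> g * (hx * hy) * (6 * affine_sq_mean A B) + g * (hx * hy) * (6 * affine_sq_mean C D)"
    using M(1)[of A B] M(1)[of C D] \<open>0 < g\<close> assms(1,2) by (intro add_mono mult_left_mono) auto
  also have "\<dots> = 6 * g * E"
    by (simp add: E_def algebra_simps)
  finally show "1 / (6 * g) * S \<le> E"
    using \<open>0 < g\<close> by (simp add: field_simps)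
  have "E \<le> hx * hy * ((A\<^sup>2 + B\<^sup>2) / 2) + hx * hy * ((C\<^sup>2 + D\<^sup>2) / 2)"
    unfolding E_def distrib_left using M(2)[of A B] M(2)[of C D] assms(1,2)
    by (intro add_mono mult_left_mono) auto
  also have "\<dots> \<le> g * hx\<^sup>2 * ((A\<^sup>2 + B\<^sup>2) / 2) + g * hy\<^sup>2 * ((C\<^sup>2 + D\<^sup>2) / 2)"
    using hxy by (intro add_mono mult_right_mono) auto
  also have "\<dots> = g / 2 * S"
    by (simp add: S_def field_simps)
  finally show "E \<le> g / 2 * S" .
qed

lemma element_seminorm_equivalence:
  assumes "x1 < x2" "y1 < y2" "K = {x1..x2} \<times> {y1..y2}" "diameter K / rho K \<le> g"
    and "\<forall>s t. (s, t) \<in> K \<longrightarrow> w (s, t) = c0 + c1 * s + c2 * t + c3 * s * t"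
  shows "(grad_sq w has_integral semi1K_sq w K) K"
    "1 / (6 * g) * semi1hK_sq w K \<le> semi1K_sq w K" "semi1K_sq w K \<le> g / 2 * semi1hK_sq w K"
proof -
  define I where "I = (x2 - x1) * (y2 - y1) *
     (affine_sq_mean (c1 + c3 * y1) (c1 + c3 * y2) + affine_sq_mean (c2 + c3 * x1) (c2 + c3 * x2))"
  have "(grad_sq w has_integral I) K"
    unfolding I_def assms(3)
    by (rule has_integral_grad_sq_bilinear) (use assms in \<open>auto simp del: mem_Times_iff\<close>)
  moreover from this have "semi1K_sq w K = I"
    by (simp add: semi1K_sq_def integral_unique)
  ultimately show "(grad_sq w has_integral semi1K_sq w K) K"
    by simp
  have "x2 - x1 \<le> g * (y2 - y1)" "y2 - y1 \<le> g * (x2 - x1)"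
    using rect_aspect_ratio_le[OF assms(1,2)] assms(3,4) by simp_all
  from rect_energy_bounds[OF _ _ this, of "c1 + c3 * y1" "c1 + c3 * y2" "c2 + c3 * x1" "c2 + c3 * x2"]
  show "1 / (6 * g) * semi1hK_sq w K \<le> semi1K_sq w K" "semi1K_sq w K \<le> g / 2 * semi1hK_sq w K"
    using assms(1,2) by (simp_all add: semi1hK_sq_bilinear[OF assms(1-3,5)] \<open>semi1K_sq w K = I\<close> I_def)
qed

lemma Uh_element_seminorm_equivalence:
  assumes "conforming_rect_partition T \<Omega>" "K \<in> T" "w \<in> Uh T \<Omega>" "diameter K / rho K \<le> g"
  shows "(grad_sq w has_integral semi1K_sq w K) K"
    "1 / (6 * g) * semi1hK_sq w K \<le> semi1K_sq w K" "semi1K_sq w K \<le> g / 2 * semi1hK_sq w K"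
proof -
  obtain x1 x2 y1 y2 where rect: "x1 < x2" "y1 < y2" "K = {x1..x2} \<times> {y1..y2}"
    using assms(1,2) by (auto simp: conforming_rect_partition_def is_rect_def)
  obtain c0 c1 c2 c3
    where "\<forall>s t. (s, t) \<in> K \<longrightarrow> w (s, t) = c0 + c1 * s + c2 * t + c3 * s * t"
    using assms(2,3) by (fastforce simp: Uh_def Q1_def)
  from element_seminorm_equivalence[OF rect assms(4) this]
  show "(grad_sq w has_integral semi1K_sq w K) K"
    "1 / (6 * g) * semi1hK_sq w K \<le> semi1K_sq w K" "semi1K_sq w K \<le> g / 2 * semi1hK_sq w K" .
qed

lemma has_integral_Union_rects:
  fixes f :: "real \<times> real \<Rightarrow> 'a::banach"
  assumes "finite T" "\<forall>K\<in>T. is_rect K"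
    and "\<forall>K\<in>T. \<forall>K'\<in>T. K \<noteq> K' \<longrightarrow> interior K \<inter> interior K' = {}"
    and "\<And>K. K \<in> T \<Longrightarrow> (f has_integral i K) K"
  shows "(f has_integral (\<Sum>K\<in>T. i K)) (\<Union>T)"
proof (rule has_integral_Union)
  show "finite T" "\<And>K. K \<in> T \<Longrightarrow> (f has_integral i K) K"
    using assms(1,4) by auto
  show "pairwise (\<lambda>K K'. negligible (K \<inter> K')) T"
  proof (rule pairwiseI)
    fix K K' assume "K \<in> T" "K' \<in> T" "K \<noteq> K'"
    then have "K \<inter> K' \<subseteq> (K - interior K) \<union> (K' - interior K')"
      using assms(3) by blast
    moreover have "negligible ((K - interior K) \<union> (K' - interior K'))"
      using \<open>K \<in> T\<close> \<open>K' \<in> T\<close> assms(2) by (simp add: negligible_Un negligible_rect_minus_interior)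
    ultimately show "negligible (K \<inter> K')"
      by (rule negligible_subset[rotated])
  qed
qed

lemma semi1_sq_eq_sum:
  assumes "conforming_rect_partition T \<Omega>" "convex \<Omega>"
    and "\<And>K. K \<in> T \<Longrightarrow> (grad_sq w has_integral semi1K_sq w K) K"
  shows "(semi1 w \<Omega>)\<^sup>2 = (\<Sum>K\<in>T. semi1K_sq w K)"
proof -
  have "(grad_sq w has_integral (\<Sum>K\<in>T. semi1K_sq w K)) (closure \<Omega>)"
    using assms(1,3) has_integral_Union_rects[of T "grad_sq w" "semi1K_sq w"]
    by (auto simp: conforming_rect_partition_def)
  then have "(grad_sq w has_integral (\<Sum>K\<in>T. semi1K_sq w K)) \<Omega>"
    using negligible_convex_frontier[OF assms(2)] by (simp add: has_integral_closure)
  moreover have "0 \<le> semi1K_sq w K" if "K \<in> T" for K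
    by (rule has_integral_nonneg[OF assms(3)[OF that]]) (simp add: grad_sq_def)
  ultimately show ?thesis
    by (simp add: semi1_def integral_unique sum_nonneg)
qed

lemma semi1h_sq_eq_sum: "(semi1h w T)\<^sup>2 = (\<Sum>K\<in>T. semi1hK_sq w K)"
  by (simp add: semi1h_def semi1hK_sq_def Let_def sum_nonneg)

theorem lemma4p1:
  fixes a1 b1 a2 b2 \<gamma> :: real
    and \<Omega> :: "(real \<times> real) set"
    and T :: "(real \<times> real) set set"
    and w :: "real \<times> real \<Rightarrow> real"
  assumes "a1 < b1" and "a2 < b2"
    and "\<Omega> = {a1<..<b1} \<times> {a2<..<b2}"
    and "conforming_rect_partition T \<Omega>"
    and "\<forall>K\<in>T. diameter K / rho K \<le> \<gamma>"
    and "w \<in> Uh T \<Omega>"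
  shows "(\<forall>K\<in>T. 1 / (6 * \<gamma>) * semi1hK_sq w K \<le> semi1K_sq w K \<and>
                semi1K_sq w K \<le> \<gamma> / 2 * semi1hK_sq w K)
         \<and> 1 / (6 * \<gamma>) * (semi1h w T)\<^sup>2 \<le> (semi1 w \<Omega>)\<^sup>2
         \<and> (semi1 w \<Omega>)\<^sup>2 \<le> \<gamma> / 2 * (semi1h w T)\<^sup>2"
proof -
  note element = Uh_element_seminorm_equivalence[OF assms(4) _ assms(6)]
  have "convex \<Omega>"
    using assms(3) by (simp add: convex_Times)
  have semi1_sq: "(semi1 w \<Omega>)\<^sup>2 = (\<Sum>K\<in>T. semi1K_sq w K)"
    by (rule semi1_sq_eq_sum[OF assms(4) \<open>convex \<Omega>\<close> element(1)]) (use assms(5) in auto)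
  have "1 / (6 * \<gamma>) * (\<Sum>K\<in>T. semi1hK_sq w K) \<le> (\<Sum>K\<in>T. semi1K_sq w K)"
    "(\<Sum>K\<in>T. semi1K_sq w K) \<le> \<gamma> / 2 * (\<Sum>K\<in>T. semi1hK_sq w K)"
    unfolding sum_distrib_left using element(2,3) assms(5) by (blast intro: sum_mono)+
  with element(2,3) assms(5) show ?thesis
    unfolding semi1_sq semi1h_sq_eq_sum by blast
qed

end
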